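(* Let $X$ be a Tychonoff locally Menger $p$-space, and let $Y=bX\setminus X$ be a remainder of $X$ in some compactification $bX$. If $Y$ is homogeneous, then $Y$ is an $s$-space.
   Context: A space $X$ is Menger if for each sequence $(\mathcal{U}_n)$ of open covers of $X$ there is a sequence $(\mathcal{V}_n)$ with each $\mathcal{V}_n$ a finite subset of $\mathcal{U}_n$ and $\bigcup_{n}\bigcup\mathcal{V}_n=X$. A space $X$ is locally Menger if for each $x\in X$ there exist an open set $U$ and a Menger subspace $Y$ of $X$ with $x\in U\subseteq Y$. A Tychonoff space $X$ is a $p$-space if in some (equivalently, any) compactification $bX$ there is a countable family $\{\mathcal{U}_n:n\in\mathbb{N}\}$, each $\mathcal{U}_n$ a collection of open subsets of $bX$, such that for each $x\in X$, $x\in\bigcap_{n}\bigcup\{U\in\mathcal{U}_n:x\in U\}\subseteq X$. For a family $\mathcal{C}$ of subsets of $Z$, $\mathcal{C}_\delta$ is the family of intersections of nonempty subfamilies of $\mathcal{C}$ and $\mathcal{C}_{\delta,\sigma}$ the family of unions of subfamilies of $\mathcal{C}_\delta$; $\mathcal{C}$ is a source for $Y\subseteq Z$ if $Y\in\mathcal{C}_{\delta,\sigma}$. A Tychonoff space $X$ is an $s$-space if there is a countable source for $X$ in some (equivalently, any) compactification $bX$ consisting of open subsets of $bX$. A space $Y$ is homogeneous if for any $x,y\in Y$ there is a homeomorphism $h:Y\to Y$ with $h(x)=y$. *)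

theory Defs
  imports "HOL-Analysis.Analysis"
begin

definition tychonoff_space :: "'a topology \<Rightarrow> bool" where
  "tychonoff_space X \<longleftrightarrow> completely_regular_space X \<and> Hausdorff_space X"

definition menger_space :: "'a topology \<Rightarrow> bool" where
  "menger_space X \<longleftrightarrow>
     (\<forall>\<U> :: nat \<Rightarrow> 'a set set.
        (\<forall>n. (\<forall>U\<in>\<U> n. openin X U) \<and> topspace X \<subseteq> \<Union>(\<U> n)) \<longrightarrow>
        (\<exists>\<V> :: nat \<Rightarrow> 'a set set.
           (\<forall>n. finite (\<V> n) \<and> \<V> n \<subseteq> \<U> n) \<and>
           topspace X \<subseteq> (\<Union>n. \<Union>(\<V> n))))"

definition locally_menger :: "'a topology \<Rightarrow> bool" where
  "locally_menger X \<longleftrightarrow>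
     (\<forall>x\<in>topspace X. \<exists>U Y. openin X U \<and> Y \<subseteq> topspace X \<and>
         menger_space (subtopology X Y) \<and> x \<in> U \<and> U \<subseteq> Y)"

text \<open>bX is a compactification of the subspace X of it
  (X is identified with its homeomorphic copy inside bX).\<close>
definition compactification_of :: "'a topology \<Rightarrow> 'a set \<Rightarrow> bool" where
  "compactification_of bX X \<longleftrightarrow>
     compact_space bX \<and> Hausdorff_space bX \<and> X \<subseteq> topspace bX \<and>
     bX closure_of X = topspace bX"

definition p_space_in :: "'a topology \<Rightarrow> 'a set \<Rightarrow> bool" where
  "p_space_in bX X \<longleftrightarrow>
     (\<exists>\<U> :: nat \<Rightarrow> 'a set set.
        (\<forall>n. \<forall>U\<in>\<U> n. openin bX U) \<and>
        (\<forall>x\<in>X. x \<in> (\<Inter>n. \<Union>{U\<in>\<U> n. x \<in> U}) \<and>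
                 (\<Inter>n. \<Union>{U\<in>\<U> n. x \<in> U}) \<subseteq> X))"

definition delta_family :: "'a set set \<Rightarrow> 'a set set" where
  "delta_family C = {\<Inter>F | F. F \<subseteq> C \<and> F \<noteq> {}}"

definition delta_sigma_family :: "'a set set \<Rightarrow> 'a set set" where
  "delta_sigma_family C = {\<Union>G | G. G \<subseteq> delta_family C}"

definition is_source :: "'a set set \<Rightarrow> 'a set \<Rightarrow> bool" where
  "is_source C Y \<longleftrightarrow> Y \<in> delta_sigma_family C"

definition s_space_in :: "'a topology \<Rightarrow> 'a set \<Rightarrow> bool" where
  "s_space_in bY Y \<longleftrightarrow>
     (\<exists>C. countable C \<and> (\<forall>c\<in>C. openin bY c) \<and> is_source C Y)"

definition homogeneous_space :: "'a topology \<Rightarrow> bool" where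
  "homogeneous_space Y \<longleftrightarrow>
     (\<forall>x\<in>topspace Y. \<forall>y\<in>topspace Y. \<exists>h. homeomorphic_map Y Y h \<and> h x = y)"

end

theory Submission
  imports Defs
begin

text \<open>
  Say that the remainder Y is countably separated near a point z of bX if, on some neighbourhood
  W of z, one countable family of open subsets of Y separates the points outside Y from those of
  Y: for x in W - Y and y in Y some member contains y but does not have x in its closure. If this
  holds near every point of bX, compactness leaves finitely many such families, and the traces of
  their members on the closure of Y form a countable source for Y.

  It holds near every point x of X: near x, X is Menger and hence Lindelof, so each cover of the
  p-space structure has a countable refinement by open sets whose closures lie inside its members,
  and the complements of these closures separate. The property is open, so it passes from a point
  of X in the closure of Y to nearby points of Y (if there is no such point it holds trivially),
  and homogeneity spreads it over Y. The transfer along a self-homeomorphism h of Y, which need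
  not extend to bX, is the delicate step: for x in X near h y0, a compactness argument over bX
  shows that the inverse of h maps the trace on Y of some neighbourhood of x off a finite
  intersection of the separating sets at y0.
\<close>

section \<open>Covering lemmas\<close>

lemma menger_imp_Lindelof_space:
  assumes "menger_space X"
  shows "Lindelof_space X"
  unfolding Lindelof_space_alt
proof (intro allI impI)
  fix \<U> assume "(\<forall>U\<in>\<U>. openin X U) \<and> topspace X \<subseteq> \<Union>\<U>"
  then obtain \<V> :: "nat \<Rightarrow> 'a set set"
    where \<V>: "\<forall>n. finite (\<V> n) \<and> \<V> n \<subseteq> \<U>" and cover: "topspace X \<subseteq> (\<Union>n. \<Union>(\<V> n))"
    using assms unfolding menger_space_def by (drule_tac x="\<lambda>n. \<U>" in spec) auto
  have "countable (\<Union>n. \<V> n)"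
    using \<V> by (simp add: countable_finite)
  moreover have "(\<Union>n. \<V> n) \<subseteq> \<U>"
    using \<V> by blast
  moreover have "topspace X \<subseteq> \<Union>(\<Union>n. \<V> n)"
    using cover by (auto simp: subset_iff)
  ultimately show "\<exists>\<V>. countable \<V> \<and> \<V> \<subseteq> \<U> \<and> topspace X \<subseteq> \<Union>\<V>"
    by blast
qed

lemma regular_space_closure_of_subset_nbhd:
  assumes "regular_space X" "openin X W" "x \<in> W"
  obtains U where "openin X U" "x \<in> U" "X closure_of U \<subseteq> W"
proof -
  obtain U C where "openin X U" "closedin X C" "x \<in> U" "U \<subseteq> C" "C \<subseteq> W"
    using assms neighbourhood_base_of_closedin unfolding neighbourhood_base_of by metis
  moreover from this have "X closure_of U \<subseteq> W"
    using closure_of_minimal by blast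
  ultimately show ?thesis
    using that by blast
qed

lemma Lindelof_countable_closure_refinements:
  fixes \<U> :: "nat \<Rightarrow> 'a set set"
  assumes reg: "regular_space X" and L: "Lindelof_space (subtopology X L)"
    and \<U>: "\<And>n. \<forall>U\<in>\<U> n. openin X U" "\<And>n. L \<subseteq> \<Union>(\<U> n)"
  obtains \<V> where "\<forall>n. countable (\<V> n) \<and> (\<forall>V\<in>\<V> n. openin X V \<and> (\<exists>U\<in>\<U> n. X closure_of V \<subseteq> U)) \<and>
    L \<subseteq> \<Union>(\<V> n)"
proof -
  have "L \<subseteq> topspace X"
    using \<U> openin_subset by blast
  have "\<exists>\<V>. countable \<V> \<and> (\<forall>V\<in>\<V>. openin X V \<and> (\<exists>U\<in>\<U> n. X closure_of V \<subseteq> U)) \<and> L \<subseteq> \<Union>\<V>" for n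
  proof -
    define \<W> where "\<W> = {V. openin X V \<and> (\<exists>U\<in>\<U> n. X closure_of V \<subseteq> U)}"
    have "L \<subseteq> \<Union>\<W>"
    proof
      fix x assume "x \<in> L"
      then obtain U where "U \<in> \<U> n" "x \<in> U"
        using \<U>(2) by blast
      moreover obtain V where "openin X V" "x \<in> V" "X closure_of V \<subseteq> U"
        using regular_space_closure_of_subset_nbhd[OF reg] \<U>(1) calculation by metis
      ultimately show "x \<in> \<Union>\<W>"
        unfolding \<W>_def by blast
    qed
    moreover have "\<forall>V\<in>\<W>. openin X V"
      unfolding \<W>_def by blast
    ultimately obtain \<V> where "countable \<V>" "\<V> \<subseteq> \<W>" "L \<subseteq> \<Union>\<V>"
      using L \<open>L \<subseteq> topspace X\<close> Lindelof_space_subtopology_subset by metis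
    then show ?thesis
      unfolding \<W>_def by blast
  qed
  then have "\<forall>n. \<exists>\<V>. countable \<V> \<and> (\<forall>V\<in>\<V>. openin X V \<and> (\<exists>U\<in>\<U> n. X closure_of V \<subseteq> U)) \<and>
      L \<subseteq> \<Union>\<V>"
    by blast
  from choice[OF this] show ?thesis
    using that by blast
qed

lemma compact_space_avoidance_local_to_global:
  fixes \<phi> :: "'a set \<Rightarrow> 'a set"
  assumes K: "compact_space K" and x: "x \<in> topspace K"
    and \<phi>: "mono \<phi>" "\<And>N. \<phi> N \<subseteq> topspace K"
    and local: "\<And>p. p \<in> topspace K \<Longrightarrow> \<exists>E N F. openin K E \<and> p \<in> E \<and> openin K N \<and> x \<in> N \<and>
                  finite F \<and> F \<subseteq> \<D> \<and> E \<inter> \<Inter>F \<inter> \<phi> N = {}"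
  obtains N F where "openin K N" "x \<in> N" "finite F" "F \<subseteq> \<D>" "\<Inter>F \<inter> \<phi> N = {}"
proof -
  define avoidable where "avoidable E \<longleftrightarrow>
    (\<exists>N F. openin K N \<and> x \<in> N \<and> finite F \<and> F \<subseteq> \<D> \<and> E \<inter> \<Inter>F \<inter> \<phi> N = {})" for E
  have avoidable_Union: "avoidable (\<Union>\<G>)" if "finite \<G>" "\<forall>E\<in>\<G>. avoidable E" for \<G>
    using that
  proof (induction \<G> rule: finite_induct)
    case empty
    show ?case
      unfolding avoidable_def using x by (intro exI[of _ "topspace K"] exI[of _ "{}"]) simp
  next
    case (insert E \<G>)
    then have "avoidable E" "avoidable (\<Union>\<G>)"
      by simp_all
    then obtain N F N' F' where
      "openin K N" "x \<in> N" "finite F" "F \<subseteq> \<D>" "E \<inter> \<Inter>F \<inter> \<phi> N = {}" and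
      "openin K N'" "x \<in> N'" "finite F'" "F' \<subseteq> \<D>" "\<Union>\<G> \<inter> \<Inter>F' \<inter> \<phi> N' = {}"
      unfolding avoidable_def by blast
    moreover have "\<phi> (N \<inter> N') \<subseteq> \<phi> N \<inter> \<phi> N'"
      by (intro Int_greatest monoD[OF \<phi>(1)]) auto
    ultimately have "openin K (N \<inter> N')" "x \<in> N \<inter> N'" "finite (F \<union> F')" "F \<union> F' \<subseteq> \<D>"
      "\<Union>(insert E \<G>) \<inter> \<Inter>(F \<union> F') \<inter> \<phi> (N \<inter> N') = {}"
      by blast+
    then show ?case
      unfolding avoidable_def by blast
  qed
  have "topspace K \<subseteq> \<Union>{E. openin K E \<and> avoidable E}"
  proof
    fix p assume "p \<in> topspace K"
    then obtain E N F where "openin K E" "p \<in> E" "openin K N" "x \<in> N" "finite F" "F \<subseteq> \<D>"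
      "E \<inter> \<Inter>F \<inter> \<phi> N = {}"
      using local[OF \<open>p \<in> topspace K\<close>] by blast
    then have "avoidable E"
      unfolding avoidable_def by (intro exI[of _ N] exI[of _ F]) blast
    with \<open>openin K E\<close> \<open>p \<in> E\<close> show "p \<in> \<Union>{E. openin K E \<and> avoidable E}"
      by blast
  qed
  then obtain \<G> where "finite \<G>" "\<G> \<subseteq> {E. openin K E \<and> avoidable E}" and \<G>: "topspace K \<subseteq> \<Union>\<G>"
    using K unfolding compact_space_alt by (metis (no_types, lifting) mem_Collect_eq)
  then have "avoidable (\<Union>\<G>)"
    by (intro avoidable_Union) auto
  then obtain N F where N: "openin K N" "x \<in> N" and F: "finite F" "F \<subseteq> \<D>"
    and avoid: "\<Union>\<G> \<inter> \<Inter>F \<inter> \<phi> N = {}"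
    unfolding avoidable_def by blast
  have "\<phi> N \<subseteq> \<Union>\<G>"
    using \<phi>(2) \<G> by (rule order_trans)
  with avoid have "\<Inter>F \<inter> \<phi> N = {}"
    by blast
  with N F show ?thesis
    by (rule that)
qed

section \<open>Countable separation near a point\<close>

definition countably_separated_near :: "'a topology \<Rightarrow> 'a set \<Rightarrow> 'a \<Rightarrow> bool" where
  "countably_separated_near K Y z \<longleftrightarrow>
     (\<exists>W \<D>. openin K W \<and> z \<in> W \<and> countable \<D> \<and> (\<forall>D\<in>\<D>. openin (subtopology K Y) D) \<and>
        (\<forall>x\<in>W - Y. \<forall>y\<in>Y. \<exists>D\<in>\<D>. y \<in> D \<and> x \<notin> K closure_of D))"

lemma countably_separated_near_nbhd:
  assumes "countably_separated_near K Y z"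
  obtains W where "openin K W" "z \<in> W" "\<forall>w\<in>W. countably_separated_near K Y w"
proof -
  obtain W \<D> where W: "openin K W" "z \<in> W" and \<D>: "countable \<D>"
    "\<forall>D\<in>\<D>. openin (subtopology K Y) D" "\<forall>x\<in>W - Y. \<forall>y\<in>Y. \<exists>D\<in>\<D>. y \<in> D \<and> x \<notin> K closure_of D"
    using assms unfolding countably_separated_near_def by blast
  have "countably_separated_near K Y w" if "w \<in> W" for w
    unfolding countably_separated_near_def using W(1) that \<D> by blast
  with W show ?thesis
    using that by blast
qed

lemma countably_separated_near_if_closed:
  assumes "Y \<subseteq> topspace K" "K closure_of Y \<subseteq> Y" "z \<in> topspace K"
  shows "countably_separated_near K Y z"
proof -
  have "openin (subtopology K Y) Y"
    using assms(1) by (metis openin_topspace topspace_subtopology_subset)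
  moreover have "x \<notin> K closure_of Y" if "x \<notin> Y" for x
    using assms(2) that by blast
  ultimately show ?thesis
    unfolding countably_separated_near_def using assms(3)
    by (intro exI[of _ "topspace K"] exI[of _ "{Y}"]) auto
qed

lemma ex_countably_separated_near:
  assumes "Y \<subseteq> topspace K" "Y \<noteq> {}"
    and remainder: "\<forall>x\<in>topspace K - Y. countably_separated_near K Y x"
  obtains y where "y \<in> Y" "countably_separated_near K Y y"
proof (cases "K closure_of Y \<subseteq> Y")
  case True
  obtain y where "y \<in> Y"
    using assms(2) by blast
  then show ?thesis
    using that countably_separated_near_if_closed[OF assms(1) True] assms(1) by blast
next
  case False
  then obtain x where x: "x \<in> K closure_of Y" "x \<notin> Y"
    by blast
  then have "countably_separated_near K Y x"
    using remainder in_closure_of by fastforce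
  then obtain W where W: "openin K W" "x \<in> W" "\<forall>w\<in>W. countably_separated_near K Y w"
    by (rule countably_separated_near_nbhd)
  obtain y where "y \<in> Y" "y \<in> W"
    using x(1) W(1,2) unfolding in_closure_of by blast
  then show ?thesis
    using that W(3) by blast
qed

lemma countably_separated_near_if_Lindelof:
  assumes reg: "regular_space K" and Y: "Y \<subseteq> topspace K"
    and p: "p_space_in K (topspace K - Y)"
    and W: "openin K W" "x0 \<in> W"
    and L: "W - Y \<subseteq> L" "L \<subseteq> topspace K - Y" "Lindelof_space (subtopology K L)"
  shows "countably_separated_near K Y x0"
proof -
  obtain \<U> :: "nat \<Rightarrow> 'a set set" where \<U>_open: "\<forall>n. \<forall>U\<in>\<U> n. openin K U"
    and \<U>_p: "\<forall>x\<in>topspace K - Y. x \<in> (\<Inter>n. \<Union>{U\<in>\<U> n. x \<in> U}) \<and> (\<Inter>n. \<Union>{U\<in>\<U> n. x \<in> U}) \<subseteq> topspace K - Y"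
    using p unfolding p_space_in_def by blast
  have "L \<subseteq> \<Union>(\<U> n)" for n
    using L(2) \<U>_p by blast
  then obtain \<V> where \<V>: "\<forall>n. countable (\<V> n) \<and>
      (\<forall>V\<in>\<V> n. openin K V \<and> (\<exists>U\<in>\<U> n. K closure_of V \<subseteq> U)) \<and> L \<subseteq> \<Union>(\<V> n)"
    using Lindelof_countable_closure_refinements[OF reg L(3)] \<U>_open by metis
  define \<D> where "\<D> = (\<lambda>V. Y - K closure_of V) ` (\<Union>n. \<V> n)"
  have separating: "\<exists>D\<in>\<D>. y \<in> D \<and> x \<notin> K closure_of D" if x: "x \<in> W - Y" and y: "y \<in> Y" for x y
  proof -
    have "x \<in> L" "x \<in> topspace K - Y"
      using x L(1,2) by blast+
    then have "y \<notin> (\<Inter>n. \<Union>{U\<in>\<U> n. x \<in> U})"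
      using \<U>_p y by blast
    then obtain n where n: "\<forall>U\<in>\<U> n. x \<in> U \<longrightarrow> y \<notin> U"
      by blast
    obtain V U where V: "V \<in> \<V> n" "x \<in> V" "openin K V" and U: "U \<in> \<U> n" "K closure_of V \<subseteq> U"
      using \<V> \<open>x \<in> L\<close> by blast
    have "x \<in> U"
      using V U closure_of_subset[OF openin_subset[OF V(3)]] by blast
    then have "y \<in> Y - K closure_of V"
      using n U y by blast
    moreover have "V \<inter> K closure_of (Y - K closure_of V) = {}"
      using openin_Int_closure_of_eq_empty[OF V(3)] closure_of_subset[OF openin_subset[OF V(3)]] by blast
    ultimately show ?thesis
      using V unfolding \<D>_def by blast
  qed
  have "countable \<D>"
    unfolding \<D>_def using \<V> by blast
  moreover have "\<forall>D\<in>\<D>. openin (subtopology K Y) D"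
    unfolding \<D>_def using openin_subtopology_diff_closed[OF Y closedin_closure_of] by blast
  ultimately show ?thesis
    unfolding countably_separated_near_def using W separating by blast
qed

lemma countably_separated_near_if_locally_menger:
  assumes reg: "regular_space K" and Y: "Y \<subseteq> topspace K"
    and lm: "locally_menger (subtopology K (topspace K - Y))"
    and p: "p_space_in K (topspace K - Y)"
    and x: "x \<in> topspace K - Y"
  shows "countably_separated_near K Y x"
proof -
  let ?X = "topspace K - Y"
  have "topspace (subtopology K ?X) = ?X"
    by auto
  then obtain U M where U: "openin (subtopology K ?X) U" "x \<in> U" "U \<subseteq> M"
    and M: "M \<subseteq> ?X" "menger_space (subtopology (subtopology K ?X) M)"
    using lm[unfolded locally_menger_def, rule_format, of x] x by auto
  obtain N where N: "openin K N" "U = N \<inter> ?X"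
    using U(1) unfolding openin_subtopology by blast
  obtain W where W: "openin K W" "x \<in> W" "K closure_of W \<subseteq> N"
    using regular_space_closure_of_subset_nbhd[OF reg N(1)] U(2) N(2) by blast
  define L where "L = M \<inter> K closure_of W"
  have "W \<subseteq> K closure_of W"
    using closure_of_subset[OF openin_subset[OF W(1)]] .
  then have "W - Y \<subseteq> L"
    using W(3) U(3) N(2) closure_of_subset_topspace[of K W] unfolding L_def by blast
  moreover have "L \<subseteq> ?X"
    using M(1) unfolding L_def by blast
  moreover have "Lindelof_space (subtopology (subtopology K M) L)"
    unfolding L_def using M(2) M(1)
    by (intro Lindelof_space_closedin_subtopology menger_imp_Lindelof_space
        closedin_subtopology_Int_closed closedin_closure_of) (simp add: subtopology_subtopology Int_absorb1)
  then have "Lindelof_space (subtopology K L)"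
    by (simp add: subtopology_subtopology L_def)
  ultimately show ?thesis
    by (rule countably_separated_near_if_Lindelof[OF reg Y p W(1,2)])
qed

section \<open>Transport along self-homeomorphisms of the remainder\<close>

lemma homeomorphic_maps_subtopology_selfD:
  assumes Y: "Y \<subseteq> topspace K" and hom: "homeomorphic_maps (subtopology K Y) (subtopology K Y) h g"
  shows "\<forall>a\<in>Y. g (h a) = a" "\<forall>a\<in>Y. h (g a) = a" "h ` Y = Y" "g ` Y = Y"
    and "\<And>U. openin (subtopology K Y) U \<Longrightarrow> openin (subtopology K Y) (h ` U)"
    and "\<And>U. openin (subtopology K Y) U \<Longrightarrow> openin (subtopology K Y) (g ` U)"
proof -
  have top: "topspace (subtopology K Y) = Y"
    using Y by auto
  have h: "homeomorphic_map (subtopology K Y) (subtopology K Y) h"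
    and g: "homeomorphic_map (subtopology K Y) (subtopology K Y) g"
    using hom unfolding homeomorphic_maps_map by blast+
  show "\<forall>a\<in>Y. g (h a) = a" "\<forall>a\<in>Y. h (g a) = a"
    using hom unfolding homeomorphic_maps_map top by blast+
  show "h ` Y = Y" "g ` Y = Y"
    using homeomorphic_imp_surjective_map[OF h] homeomorphic_imp_surjective_map[OF g] top by simp_all
  show "openin (subtopology K Y) (h ` U)" "openin (subtopology K Y) (g ` U)"
    if "openin (subtopology K Y) U" for U
    using homeomorphic_imp_open_map[OF h] homeomorphic_imp_open_map[OF g] that
    unfolding open_map_def by blast+
qed

lemma homeomorphic_maps_separate_trace:
  assumes K: "Hausdorff_space K" and Y: "Y \<subseteq> topspace K"
    and hom: "homeomorphic_maps (subtopology K Y) (subtopology K Y) h g"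
    and x: "x \<in> topspace K - Y" and p: "p \<in> Y"
  obtains E N where "openin K E" "p \<in> E" "openin K N" "x \<in> N" "E \<inter> g ` (N \<inter> Y) = {}"
proof -
  note hom_facts = homeomorphic_maps_subtopology_selfD[OF Y hom]
  have "h p \<in> Y"
    using p hom_facts(3) by blast
  then have "h p \<in> topspace K" "x \<noteq> h p"
    using Y x by auto
  then obtain N U where N: "openin K N" "x \<in> N" and U: "openin K U" "h p \<in> U" and "disjnt N U"
    using K x unfolding Hausdorff_space_def by (metis Diff_iff)
  obtain E where E: "openin K E" "g ` (U \<inter> Y) = E \<inter> Y"
    using hom_facts(6)[OF openin_subtopology_Int[OF U(1)]] unfolding openin_subtopology by blast
  have "p \<in> E"
    using E(2) U(2) \<open>h p \<in> Y\<close> hom_facts(1) p by (metis IntD1 IntI image_eqI)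
  moreover have "E \<inter> g ` (N \<inter> Y) = {}"
  proof -
    have "a = b" if "a \<in> Y" "b \<in> Y" "g a = g b" for a b
      using that hom_facts(2) by metis
    moreover have "g ` (N \<inter> Y) \<subseteq> Y"
      using hom_facts(4) by blast
    ultimately show ?thesis
      using E(2) \<open>disjnt N U\<close> unfolding disjnt_def by blast
  qed
  ultimately show ?thesis
    using that E(1) N by blast
qed

lemma homeomorphic_trace_locally_avoidable:
  assumes K: "Hausdorff_space K" and Y: "Y \<subseteq> topspace K"
    and hom: "homeomorphic_maps (subtopology K Y) (subtopology K Y) h g"
    and \<D>0: "\<forall>D\<in>\<D>0. openin (subtopology K Y) D"
    and sep0: "\<forall>x\<in>W0 - Y. \<forall>y\<in>Y. \<exists>D\<in>\<D>0. y \<in> D \<and> x \<notin> K closure_of D"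
    and W1: "openin K W1" "K closure_of W1 \<subseteq> W0"
    and W: "openin K W" "g ` (W \<inter> Y) \<subseteq> W1"
    and x: "x \<in> W - Y" and y: "y \<in> Y" and p: "p \<in> topspace K"
  shows "\<exists>E N F. openin K E \<and> p \<in> E \<and> openin K N \<and> x \<in> N \<and>
           finite F \<and> F \<subseteq> {D\<in>\<D>0. y \<in> D} \<and> E \<inter> \<Inter>F \<inter> g ` (N \<inter> Y) = {}"
proof -
  have x_top: "x \<in> topspace K"
    using x W(1) openin_subset by blast
  consider "p \<in> Y" | "p \<in> W0 - Y" | "p \<notin> K closure_of W1"
    using W1(2) by blast
  then show ?thesis
  proof cases
    case 1
    then obtain E N where "openin K E" "p \<in> E" "openin K N" "x \<in> N" "E \<inter> g ` (N \<inter> Y) = {}"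
      using homeomorphic_maps_separate_trace[OF K Y hom] x x_top by (metis Diff_iff)
    then show ?thesis
      by (intro exI[of _ E] exI[of _ N] exI[of _ "{}"]) simp
  next
    case 2
    then obtain D where D: "D \<in> \<D>0" "y \<in> D" "p \<notin> K closure_of D"
      using sep0 y by blast
    have "D \<subseteq> topspace K"
      using \<D>0 D(1) openin_subset Y by fastforce
    then have "(topspace K - K closure_of D) \<inter> D = {}"
      using closure_of_subset by blast
    moreover have "openin K (topspace K - K closure_of D)"
      by (simp add: openin_diff)
    ultimately show ?thesis
      using D p x_top
      by (intro exI[of _ "topspace K - K closure_of D"] exI[of _ "topspace K"] exI[of _ "{D}"]) auto
  next
    case 3
    have "g ` (W \<inter> Y) \<subseteq> K closure_of W1"
      using W(2) closure_of_subset[OF openin_subset[OF W1(1)]] by blast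
    moreover have "openin K (topspace K - K closure_of W1)"
      by (simp add: openin_diff)
    ultimately show ?thesis
      using 3 p W(1) x
      by (intro exI[of _ "topspace K - K closure_of W1"] exI[of _ W] exI[of _ "{}"]) auto
  qed
qed

lemma homeomorphic_image_Inter_separates:
  assumes K: "compact_space K" "Hausdorff_space K" and Y: "Y \<subseteq> topspace K"
    and hom: "homeomorphic_maps (subtopology K Y) (subtopology K Y) h g"
    and \<D>0: "\<forall>D\<in>\<D>0. openin (subtopology K Y) D"
    and sep0: "\<forall>x\<in>W0 - Y. \<forall>y\<in>Y. \<exists>D\<in>\<D>0. y \<in> D \<and> x \<notin> K closure_of D"
    and W1: "openin K W1" "K closure_of W1 \<subseteq> W0"
    and W: "openin K W" "g ` (W \<inter> Y) \<subseteq> W1"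
    and x: "x \<in> W - Y" and y: "y \<in> Y"
  obtains F where "finite F" "F \<subseteq> \<D>0" "y \<in> h ` (Y \<inter> \<Inter>F)" "x \<notin> K closure_of (h ` (Y \<inter> \<Inter>F))"
proof -
  note hom_facts = homeomorphic_maps_subtopology_selfD[OF Y hom]
  have "g y \<in> Y"
    using hom_facts(4) y by blast
  have "x \<in> topspace K"
    using x W(1) openin_subset by blast
  moreover have "mono (\<lambda>N. g ` (N \<inter> Y))"
    by (auto simp: mono_def)
  moreover have "g ` (N \<inter> Y) \<subseteq> topspace K" for N
    using hom_facts(4) Y by blast
  moreover note homeomorphic_trace_locally_avoidable[OF K(2) Y hom \<D>0 sep0 W1 W x \<open>g y \<in> Y\<close>]
  ultimately obtain N F where N: "openin K N" "x \<in> N" and F: "finite F" "F \<subseteq> {D\<in>\<D>0. g y \<in> D}"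
    and avoid: "\<Inter>F \<inter> g ` (N \<inter> Y) = {}"
    by (rule compact_space_avoidance_local_to_global[OF K(1)])
  have "g y \<in> Y \<inter> \<Inter>F"
    using F(2) \<open>g y \<in> Y\<close> by blast
  then have "y \<in> h ` (Y \<inter> \<Inter>F)"
    using hom_facts(2) y by (metis image_eqI)
  moreover have "N \<inter> h ` (Y \<inter> \<Inter>F) = {}"
  proof -
    have "a \<notin> h ` (Y \<inter> \<Inter>F)" if "a \<in> N" for a
    proof
      assume "a \<in> h ` (Y \<inter> \<Inter>F)"
      then obtain e where "e \<in> Y \<inter> \<Inter>F" "a = h e"
        by blast
      then have "a \<in> N \<inter> Y" "g a \<in> \<Inter>F"
        using \<open>a \<in> N\<close> hom_facts(1,3) by auto
      then show False
        using avoid by blast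
    qed
    then show ?thesis
      by blast
  qed
  then have "x \<notin> K closure_of (h ` (Y \<inter> \<Inter>F))"
    using openin_Int_closure_of_eq_empty[OF N(1)] N(2) by blast
  moreover have "F \<subseteq> \<D>0"
    using F(2) by blast
  ultimately show ?thesis
    using that F(1) by blast
qed

lemma countably_separated_near_homeomorphic_image:
  assumes K: "compact_space K" "Hausdorff_space K" and Y: "Y \<subseteq> topspace K"
    and h: "homeomorphic_map (subtopology K Y) (subtopology K Y) h"
    and y0: "y0 \<in> Y" "countably_separated_near K Y y0"
  shows "countably_separated_near K Y (h y0)"
proof -
  obtain g where hom: "homeomorphic_maps (subtopology K Y) (subtopology K Y) h g"
    using h homeomorphic_map_maps by blast
  note hom_facts = homeomorphic_maps_subtopology_selfD[OF Y hom]
  obtain W0 \<D>0 where W0: "openin K W0" "y0 \<in> W0"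
    and \<D>0: "countable \<D>0" "\<forall>D\<in>\<D>0. openin (subtopology K Y) D"
    and sep0: "\<forall>x\<in>W0 - Y. \<forall>y\<in>Y. \<exists>D\<in>\<D>0. y \<in> D \<and> x \<notin> K closure_of D"
    using y0(2) unfolding countably_separated_near_def by blast
  obtain W1 where W1: "openin K W1" "y0 \<in> W1" "K closure_of W1 \<subseteq> W0"
    using regular_space_closure_of_subset_nbhd[OF compact_Hausdorff_imp_regular_space[OF K] W0] by blast
  obtain W where W: "openin K W" "h ` (W1 \<inter> Y) = W \<inter> Y"
    using hom_facts(5)[OF openin_subtopology_Int[OF W1(1)]] unfolding openin_subtopology by blast
  have "h y0 \<in> W"
    using W(2) W1(2) y0(1) by blast
  have g_W: "g ` (W \<inter> Y) \<subseteq> W1"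
    using W(2) hom_facts(1) by force
  define \<D> where "\<D> = (\<lambda>F. h ` (Y \<inter> \<Inter>F)) ` {F. finite F \<and> F \<subseteq> \<D>0}"
  have "countable \<D>"
    unfolding \<D>_def using \<D>0(1) by (intro countable_image countable_Collect_finite_subset)
  have Inter_open: "openin (subtopology K Y) (Y \<inter> \<Inter>F)" if "finite F" "F \<subseteq> \<D>0" for F
  proof -
    have "openin (subtopology K Y) Y"
      using Y by (metis openin_topspace topspace_subtopology_subset)
    then show ?thesis
      using that \<D>0(2) by (subst Inter_insert[symmetric], intro openin_Inter) auto
  qed
  have \<D>_open: "\<forall>D\<in>\<D>. openin (subtopology K Y) D"
    unfolding \<D>_def using hom_facts(5)[OF Inter_open] by auto
  have separating: "\<exists>D\<in>\<D>. y \<in> D \<and> x \<notin> K closure_of D" if xy: "x \<in> W - Y" "y \<in> Y" for x y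
  proof -
    obtain F where F: "finite F" "F \<subseteq> \<D>0"
      and "y \<in> h ` (Y \<inter> \<Inter>F)" "x \<notin> K closure_of (h ` (Y \<inter> \<Inter>F))"
      using homeomorphic_image_Inter_separates[OF K Y hom \<D>0(2) sep0 W1(1,3) W(1) g_W xy] .
    moreover have "h ` (Y \<inter> \<Inter>F) \<in> \<D>"
      unfolding \<D>_def using F by (intro rev_image_eqI[of F]) auto
    ultimately show ?thesis
      by (intro bexI[of _ "h ` (Y \<inter> \<Inter>F)"] conjI)
  qed
  have "openin K W \<and> h y0 \<in> W \<and> countable \<D> \<and> (\<forall>D\<in>\<D>. openin (subtopology K Y) D) \<and>
      (\<forall>x\<in>W - Y. \<forall>y\<in>Y. \<exists>D\<in>\<D>. y \<in> D \<and> x \<notin> K closure_of D)"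
    using W(1) \<open>h y0 \<in> W\<close> \<open>countable \<D>\<close> \<D>_open separating by blast
  then show ?thesis
    unfolding countably_separated_near_def by blast
qed

lemma countably_separated_near_everywhere_if_homogeneous:
  assumes K: "compact_space K" "Hausdorff_space K" and Y: "Y \<subseteq> topspace K"
    and hom: "homogeneous_space (subtopology K Y)"
    and remainder: "\<forall>x\<in>topspace K - Y. countably_separated_near K Y x"
  shows "\<forall>z\<in>topspace K. countably_separated_near K Y z"
proof -
  have "countably_separated_near K Y y" if y: "y \<in> Y" for y
  proof -
    have "Y \<noteq> {}"
      using y by blast
    then obtain y0 where y0: "y0 \<in> Y" "countably_separated_near K Y y0"
      by (rule ex_countably_separated_near[OF Y _ remainder])
    obtain h where "homeomorphic_map (subtopology K Y) (subtopology K Y) h" "h y0 = y"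
      using hom y0(1) y Y unfolding homogeneous_space_def by (metis topspace_subtopology_subset)
    then show ?thesis
      using countably_separated_near_homeomorphic_image[OF K Y _ y0] by metis
  qed
  with remainder show ?thesis
    by blast
qed

section \<open>Countable sources\<close>

lemma countably_separated_near_compact_space:
  assumes K: "compact_space K" and sep: "\<forall>z\<in>topspace K. countably_separated_near K Y z"
  obtains \<E> where "countable \<E>" "\<forall>D\<in>\<E>. openin (subtopology K Y) D"
    "\<forall>x\<in>topspace K - Y. \<forall>y\<in>Y. \<exists>D\<in>\<E>. y \<in> D \<and> x \<notin> K closure_of D"
proof -
  from sep obtain W where "\<forall>z\<in>topspace K. \<exists>\<D>. openin K (W z) \<and> z \<in> W z \<and> countable \<D> \<and>
      (\<forall>D\<in>\<D>. openin (subtopology K Y) D) \<and>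
      (\<forall>x\<in>W z - Y. \<forall>y\<in>Y. \<exists>D\<in>\<D>. y \<in> D \<and> x \<notin> K closure_of D)"
    unfolding countably_separated_near_def by (rule bchoice[THEN exE])
  then obtain \<D> where W\<D>: "\<forall>z\<in>topspace K. openin K (W z) \<and> z \<in> W z \<and> countable (\<D> z) \<and>
      (\<forall>D\<in>\<D> z. openin (subtopology K Y) D) \<and>
      (\<forall>x\<in>W z - Y. \<forall>y\<in>Y. \<exists>D\<in>\<D> z. y \<in> D \<and> x \<notin> K closure_of D)"
    by (rule bchoice[THEN exE])
  have "\<forall>U\<in>W ` topspace K. openin K U" "topspace K \<subseteq> \<Union>(W ` topspace K)"
    using W\<D> by blast+
  then obtain \<F> where "finite \<F>" "\<F> \<subseteq> W ` topspace K" "topspace K \<subseteq> \<Union>\<F>"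
    using K unfolding compact_space_alt by meson
  then obtain Q where Q: "finite Q" "Q \<subseteq> topspace K" "topspace K \<subseteq> \<Union>(W ` Q)"
    using finite_subset_image[of \<F> W "topspace K"] by blast
  have "countable (\<Union>q\<in>Q. \<D> q)"
    using W\<D> Q(1,2) by (intro countable_UN) (auto simp: countable_finite)
  moreover have "\<forall>D\<in>(\<Union>q\<in>Q. \<D> q). openin (subtopology K Y) D"
    using W\<D> Q(2) by blast
  moreover have "\<forall>x\<in>topspace K - Y. \<forall>y\<in>Y. \<exists>D\<in>(\<Union>q\<in>Q. \<D> q). y \<in> D \<and> x \<notin> K closure_of D"
  proof (intro ballI)
    fix x y assume xy: "x \<in> topspace K - Y" "y \<in> Y"
    obtain q where q: "q \<in> Q" "x \<in> W q"
      using Q(3) xy(1) by blast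
    then have "\<forall>x\<in>W q - Y. \<forall>y\<in>Y. \<exists>D\<in>\<D> q. y \<in> D \<and> x \<notin> K closure_of D"
      using W\<D> Q(2) by blast
    then obtain D where "D \<in> \<D> q" "y \<in> D" "x \<notin> K closure_of D"
      using q(2) xy by blast
    with q(1) show "\<exists>D\<in>(\<Union>q\<in>Q. \<D> q). y \<in> D \<and> x \<notin> K closure_of D"
      by blast
  qed
  ultimately show ?thesis
    by (rule that)
qed

lemma is_source_if_separating:
  assumes "\<forall>y\<in>Y. \<exists>C\<in>\<C>. y \<in> C" and "\<forall>y\<in>Y. \<forall>x. x \<notin> Y \<longrightarrow> (\<exists>C\<in>\<C>. y \<in> C \<and> x \<notin> C)"
  shows "is_source \<C> Y"
proof -
  define \<G> where "\<G> = (\<lambda>y. \<Inter>{C\<in>\<C>. y \<in> C}) ` Y"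
  have "\<G> \<subseteq> delta_family \<C>"
    using assms(1) unfolding \<G>_def delta_family_def by blast
  moreover have "Y = \<Union>\<G>"
    using assms(2) unfolding \<G>_def by blast
  ultimately show ?thesis
    unfolding is_source_def delta_sigma_family_def by blast
qed

lemma s_space_in_closure_if_separating_family:
  assumes Y: "Y \<subseteq> topspace K"
    and \<E>: "countable \<E>" "\<forall>D\<in>\<E>. openin (subtopology K Y) D"
    and sep: "\<forall>x\<in>topspace K - Y. \<forall>y\<in>Y. \<exists>D\<in>\<E>. y \<in> D \<and> x \<notin> K closure_of D"
  shows "s_space_in (subtopology K (K closure_of Y)) Y"
proof -
  define Z where "Z = K closure_of Y"
  have Y_Z: "Y \<subseteq> Z"
    unfolding Z_def using closure_of_subset[OF Y] .
  have Z: "Z \<subseteq> topspace K"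
    unfolding Z_def by (rule closure_of_subset_topspace)
  have "\<forall>D\<in>\<E>. \<exists>V. openin K V \<and> D = V \<inter> Y"
    using \<E>(2) unfolding openin_subtopology by blast
  then obtain lift where lift: "\<forall>D\<in>\<E>. openin K (lift D) \<and> D = lift D \<inter> Y"
    by (rule bchoice[THEN exE])
  define \<C> where "\<C> = insert Z ((\<lambda>D. lift D \<inter> Z) ` \<E>)"
  have "countable \<C>"
    unfolding \<C>_def using \<E>(1) by simp
  have \<C>_open: "\<forall>C\<in>\<C>. openin (subtopology K Z) C"
  proof -
    have "openin (subtopology K Z) Z"
      using Z by (metis openin_topspace topspace_subtopology_subset)
    moreover have "openin (subtopology K Z) (lift D \<inter> Z)" if "D \<in> \<E>" for D
      using lift that openin_subtopology_Int by blast
    ultimately show ?thesis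
      unfolding \<C>_def by blast
  qed
  have "\<exists>C\<in>\<C>. y \<in> C \<and> x \<notin> C" if y: "y \<in> Y" and x: "x \<notin> Y" for x y
  proof (cases "x \<in> Z")
    case False
    then show ?thesis
      using y Y_Z unfolding \<C>_def by blast
  next
    case True
    then obtain D where D: "D \<in> \<E>" "y \<in> D" "x \<notin> K closure_of D"
      using sep Z x y by blast
    then have lift_D: "openin K (lift D)" "D = lift D \<inter> Y"
      using lift by auto
    then have "lift D \<inter> Z \<subseteq> K closure_of D"
      unfolding Z_def using openin_Int_closure_of_subset[of K "lift D" Y] by simp
    moreover have "y \<in> lift D \<inter> Z"
      using lift_D D(2) y Y_Z by blast
    ultimately show ?thesis
      using D unfolding \<C>_def by blast
  qed
  moreover have "\<forall>y\<in>Y. \<exists>C\<in>\<C>. y \<in> C"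
    using Y_Z unfolding \<C>_def by blast
  ultimately have "is_source \<C> Y"
    by (intro is_source_if_separating) auto
  with \<open>countable \<C>\<close> \<C>_open show ?thesis
    unfolding s_space_in_def Z_def by blast
qed

theorem theorem5p3:
  fixes bX :: "'a topology" and X :: "'a set"
  assumes "compactification_of bX X"
    and "tychonoff_space (subtopology bX X)"
    and "locally_menger (subtopology bX X)"
    and "p_space_in bX X"
    and "homogeneous_space (subtopology bX (topspace bX - X))"
  shows "s_space_in (subtopology bX (bX closure_of (topspace bX - X))) (topspace bX - X)"
proof -
  have K: "compact_space bX" "Hausdorff_space bX" and "X \<subseteq> topspace bX"
    using assms(1) unfolding compactification_of_def by blast+
  define Y where "Y = topspace bX - X"
  have Y: "Y \<subseteq> topspace bX" and X: "X = topspace bX - Y"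
    unfolding Y_def using \<open>X \<subseteq> topspace bX\<close> by blast+
  have "\<forall>x\<in>topspace bX - Y. countably_separated_near bX Y x"
    using countably_separated_near_if_locally_menger[OF compact_Hausdorff_imp_regular_space[OF K] Y]
      assms(3,4) unfolding X by blast
  moreover have "homogeneous_space (subtopology bX Y)"
    using assms(5) unfolding Y_def .
  ultimately have "\<forall>z\<in>topspace bX. countably_separated_near bX Y z"
    using countably_separated_near_everywhere_if_homogeneous[OF K Y] by blast
  then obtain \<E> where "countable \<E>" "\<forall>D\<in>\<E>. openin (subtopology bX Y) D"
    "\<forall>x\<in>topspace bX - Y. \<forall>y\<in>Y. \<exists>D\<in>\<E>. y \<in> D \<and> x \<notin> bX closure_of D"
    by (rule countably_separated_near_compact_space[OF K(1)])
  then have "s_space_in (subtopology bX (bX closure_of Y)) Y"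
    by (rule s_space_in_closure_if_separating_family[OF Y])
  then show ?thesis
    unfolding Y_def .
qed

end
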